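(* Let $\mathfrak{G}$ be a CFSTR in which every species $X_i$ satisfies $\operatorname{TM}(X_i)\le 2$. Then $\mathfrak{G}$ passes the Jacobian Criterion, and consequently, under mass-action kinetics, $\mathfrak{G}$ does not admit multiple steady states (i.e. for no choice of positive rate constants does the mass-action system have two or more distinct positive steady states).
   Context: A chemical reaction network has species $X_1,\dots,X_s$ and a finite set of reactions $y\to y'$ with complexes $y,y'\in\mathbb{Z}_{\ge0}^s$, $y\neq y'$ ($y$ the reactant complex, $y'$ the product complex; $y_i$ is the stoichiometric coefficient of $X_i$ in $y$); every species appears in some complex. A flow reaction is an inflow $0\to X_i$ or an outflow $X_i\to 0$; all other reactions are non-flow. A reaction $y\to y'$ is reversible if $y'\to y$ is also a reaction. A CFSTR is a network containing the outflow $X_i\to0$ for every species $X_i$. Total molecularity: list the non-flow reactions as $y_1\to y_1',\dots,y_l\to y_l'$ (not reversible) and $y_{l+1}\rightleftarrows y_{l+1}',\dots,y_{l+k}\rightleftarrows y_{l+k}'$ (each reversible pair listed once); then $\operatorname{TM}(X_i)=\sum_{j=1}^{l+k}(y_{ji}+y'_{ji})$. Square networks and orientation: for a list of $n$ reactions $y_k\to y_k'$ on $n$ species, the reactant matrix $M$ is the $n\times n$ matrix with $k$-th row $y_k$ and the reaction matrix $R$ has $k$-th row $y_k-y_k'$ (columns indexed by the species); the orientation is $\operatorname{Or}=\operatorname{sign}(\det M\det R)\in\{-1,0,1\}$, and the empty network has orientation $+1$. Jacobian Criterion: a CFSTR $\mathfrak{G}$ with $s$ species passes the Jacobian Criterion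 if for every choice of $s$ distinct reactions of $\mathfrak{G}$, none of which is an inflow reaction, the $s\times s$ reactant and reaction matrices of these reactions (columns indexed by all $s$ species of $\mathfrak G$) give nonnegative orientation. (By results of Craciun and Feinberg this is equivalent to the determinant of the negative Jacobian of the mass-action vector field $f(x)=\sum_k\kappa_k x^{y_k}(y_k'-y_k)$ being positive for all $x\in\mathbb{R}^s_{>0}$ and all rate constants $\kappa>0$, and it implies that the CFSTR has no multiple positive steady states.) *)

theory Defs
  imports "HOL-Analysis.Analysis"
begin

text \<open>Species are the elements of a finite type 'n (so s = CARD('n)).\<close>

type_synonym 'n complex = "'n \<Rightarrow> nat"
type_synonym 'n reaction = "'n complex \<times> 'n complex"

definition unit_complex :: "'n \<Rightarrow> 'n complex" where
  "unit_complex i = (\<lambda>j. if j = i then 1 else 0)"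

definition is_inflow :: "'n reaction \<Rightarrow> bool" where
  "is_inflow r \<longleftrightarrow> (\<exists>i. r = ((\<lambda>_. 0), unit_complex i))"

definition is_outflow :: "'n reaction \<Rightarrow> bool" where
  "is_outflow r \<longleftrightarrow> (\<exists>i. r = (unit_complex i, (\<lambda>_. 0)))"

definition is_flow :: "'n reaction \<Rightarrow> bool" where
  "is_flow r \<longleftrightarrow> is_inflow r \<or> is_outflow r"

definition reaction_network :: "'n reaction set \<Rightarrow> bool" where
  "reaction_network G \<longleftrightarrow> finite G \<and> (\<forall>(y, y') \<in> G. y \<noteq> y') \<and>
     (\<forall>i. \<exists>(y, y') \<in> G. y i > 0 \<or> y' i > 0)"

definition CFSTR :: "'n reaction set \<Rightarrow> bool" where
  "CFSTR G \<longleftrightarrow> reaction_network G \<and> (\<forall>i. (unit_complex i, (\<lambda>_. 0)) \<in> G)"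

text \<open>Total molecularity: each non-flow reaction y\<rightarrow>y' contributes y_i + y'_i, with a
  reversible pair y \<rightleftarrows> y' counted once. This is realised by summing over the
  unordered pairs {y, y'} arising from non-flow reactions (y \<noteq> y', so the inner sum is y_i + y'_i).\<close>
definition TM :: "'n reaction set \<Rightarrow> 'n \<Rightarrow> nat" where
  "TM G i = (\<Sum>c \<in> {{y, y'} | y y'. (y, y') \<in> G \<and> \<not> is_flow (y, y')}. \<Sum>z \<in> c. z i)"

text \<open>Reactant matrix and reaction matrix of a list of s reactions indexed by the species type.\<close>
definition reactant_matrix :: "('n::finite \<Rightarrow> 'n reaction) \<Rightarrow> real^'n^'n" where
  "reactant_matrix \<sigma> = (\<chi> k j. real (fst (\<sigma> k) j))"

definition reaction_matrix :: "('n::finite \<Rightarrow> 'n reaction) \<Rightarrow> real^'n^'n" where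
  "reaction_matrix \<sigma> = (\<chi> k j. real (fst (\<sigma> k) j) - real (snd (\<sigma> k) j))"

definition orientation :: "('n::finite \<Rightarrow> 'n reaction) \<Rightarrow> real" where
  "orientation \<sigma> = sgn (det (reactant_matrix \<sigma>) * det (reaction_matrix \<sigma>))"

text \<open>Jacobian criterion: every choice of s distinct non-inflow reactions has
  nonnegative orientation (the ordering of the chosen reactions does not affect the orientation).\<close>
definition passes_jacobian_criterion :: "('n::finite) reaction set \<Rightarrow> bool" where
  "passes_jacobian_criterion G \<longleftrightarrow>
     (\<forall>\<sigma> :: 'n \<Rightarrow> 'n reaction. inj \<sigma> \<longrightarrow> range \<sigma> \<subseteq> G \<longrightarrow> (\<forall>k. \<not> is_inflow (\<sigma> k))
        \<longrightarrow> orientation \<sigma> \<ge> 0)"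

definition mass_action :: "('n::finite) reaction set \<Rightarrow> ('n reaction \<Rightarrow> real) \<Rightarrow> real^'n \<Rightarrow> real^'n" where
  "mass_action G \<kappa> x = (\<Sum>r \<in> G. (\<kappa> r * (\<Prod>j\<in>UNIV. (x $ j) ^ fst r j)) *\<^sub>R
        (\<chi> j. real (snd r j) - real (fst r j)))"

definition positive_vec :: "real^'n \<Rightarrow> bool" where
  "positive_vec x \<longleftrightarrow> (\<forall>j. x $ j > 0)"

definition no_multiple_steady_states :: "('n::finite) reaction set \<Rightarrow> bool" where
  "no_multiple_steady_states G \<longleftrightarrow>
     (\<forall>\<kappa>. (\<forall>r\<in>G. \<kappa> r > 0) \<longrightarrow>
        (\<forall>x y. positive_vec x \<longrightarrow> positive_vec y \<longrightarrow>
           mass_action G \<kappa> x = 0 \<longrightarrow> mass_action G \<kappa> y = 0 \<longrightarrow> x = y))"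

end

theory Submission
  imports Defs
begin

(* Let Y and R = Y - Y' be the reactant and reaction matrices of n = CARD('n)
   chosen non-inflow reactions.  Rows belonging to outflows are unit rows of Y and zero rows
   of Y'.  If det Y <> 0 we deform Y into R along Y - tY', 0 <= t <= 1.  For t < 1 the matrix
   stays nonsingular: from a left null vector w one keeps the entries of maximal modulus on the
   non-outflow rows; since every species occurs at most twice (TM <= 2) in these rows, a short
   case analysis shows this part is orthogonal to the free columns of Y, and it extends across
   the outflow rows to a nonzero left null vector of Y.  By the intermediate value theorem
   det Y and det R then have the same sign, which is the Jacobian Criterion.
   For the absence of multiple steady states we expand det B(c), where
   B(c) = sum_r c_r y_r (y_r - y'_r)^T, by a Cauchy-Binet type identity into terms
   c_f det Y_f det R_f; all are >= 0 by the criterion and the all-outflow choice is > 0,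
   so det B(c) > 0.  Writing differences of
   monomials as positive multiples of differences of their logarithms shows that
   f(x) = f(z) forces ln x - ln z into the left kernel of some B(c), hence x = z. *)

lemma det_nz_left_null:
  fixes A :: "real^'n::finite^'n"
  shows "det A \<noteq> 0 \<longleftrightarrow> (\<forall>x. x v* A = 0 \<longrightarrow> x = 0)"
proof -
  have "det A \<noteq> 0 \<longleftrightarrow> invertible (transpose A)"
    by (simp add: invertible_det_nz)
  also have "\<dots> \<longleftrightarrow> (\<forall>x. transpose A *v x = 0 \<longrightarrow> x = 0)"
    by (simp add: invertible_left_inverse matrix_left_invertible_ker)
  finally show ?thesis by simp
qed

lemma det_sum_rank_one_rows:
  fixes c :: "'r \<Rightarrow> 'a::comm_ring_1" and p q :: "'r \<Rightarrow> 'n::finite \<Rightarrow> 'a"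
  assumes finG: "finite G"
  shows "det (\<chi> i j. \<Sum>r\<in>G. c r * p r i * q r j) =
    (\<Sum>f\<in>{f. \<forall>i. f i \<in> G}. (\<Prod>i\<in>UNIV. c (f i) * p (f i) i) * det (\<chi> i j. q (f i) j))"
proof -
  define F where "F = {f :: 'n \<Rightarrow> 'r. \<forall>i. f i \<in> G}"
  define P where "P = {\<pi>. \<pi> permutes (UNIV :: 'n set)}"
  have F: "F = Pi\<^sub>E UNIV (\<lambda>_. G)" by (simp add: F_def PiE_UNIV_domain Pi_def)
  have "det (\<chi> i j. \<Sum>r\<in>G. c r * p r i * q r j) =
      (\<Sum>\<pi>\<in>P. of_int (sign \<pi>) * (\<Prod>i\<in>UNIV. \<Sum>r\<in>G. c r * p r i * q r (\<pi> i)))"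
    by (simp add: det_def P_def)
  also have "\<dots> = (\<Sum>\<pi>\<in>P. \<Sum>f\<in>F. of_int (sign \<pi>) * (\<Prod>i\<in>UNIV. c (f i) * p (f i) i * q (f i) (\<pi> i)))"
    unfolding F by (simp add: prod_sum_PiE finG sum_distrib_left)
  also have "\<dots> = (\<Sum>f\<in>F. (\<Prod>i\<in>UNIV. c (f i) * p (f i) i) *
      (\<Sum>\<pi>\<in>P. of_int (sign \<pi>) * (\<Prod>i\<in>UNIV. q (f i) (\<pi> i))))"
    by (subst sum.swap) (simp add: sum_distrib_left prod.distrib mult_ac)
  also have "\<dots> = (\<Sum>f\<in>F. (\<Prod>i\<in>UNIV. c (f i) * p (f i) i) * det (\<chi> i j. q (f i) j))"
    by (simp add: det_def P_def)
  finally show ?thesis by (simp add: F_def)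
qed

text \<open>A Cauchy-Binet type identity: averaging the expansion over the row permutations
  turns the weight of each choice f into det P_f * det Q_f.\<close>

lemma det_sum_rank_one_rows_symmetric:
  fixes c :: "'r \<Rightarrow> 'a::comm_ring_1" and p q :: "'r \<Rightarrow> 'n::finite \<Rightarrow> 'a"
  assumes finG: "finite G"
  shows "of_nat (fact CARD('n)) * det (\<chi> i j. \<Sum>r\<in>G. c r * p r i * q r j) =
    (\<Sum>f\<in>{f. \<forall>i. f i \<in> G}.
       (\<Prod>i\<in>UNIV. c (f i)) * det (\<chi> i j. p (f i) j) * det (\<chi> i j. q (f i) j))"
proof -
  define F where "F = {f :: 'n \<Rightarrow> 'r. \<forall>i. f i \<in> G}"
  define P where "P = {\<pi>. \<pi> permutes (UNIV :: 'n set)}"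
  define g where "g f = (\<Prod>i\<in>UNIV. c (f i) * p (f i) i) * det (\<chi> i j. q (f i) j)" for f
  have reindex: "(\<Sum>f\<in>F. g f) = (\<Sum>f\<in>F. g (f \<circ> \<pi>))" if "\<pi> \<in> P" for \<pi>
  proof -
    have "f \<circ> inv \<pi> \<circ> \<pi> = f" "f \<circ> \<pi> \<circ> inv \<pi> = f" for f :: "'n \<Rightarrow> 'r"
      using permutes_inverses[of \<pi> UNIV] that by (auto simp: P_def fun_eq_iff)
    then show ?thesis
      by (intro sum.reindex_bij_witness[where i = "\<lambda>f. f \<circ> \<pi>" and j = "\<lambda>f. f \<circ> inv \<pi>"])
        (auto simp: F_def)
  qed
  have orbit: "(\<Sum>\<pi>\<in>P. g (f \<circ> \<pi>)) =
      (\<Prod>i\<in>UNIV. c (f i)) * det (\<chi> i j. p (f i) j) * det (\<chi> i j. q (f i) j)" for f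
  proof -
    have "g (f \<circ> \<pi>) = (\<Prod>i\<in>UNIV. c (f i)) * det (\<chi> i j. q (f i) j) *
        (of_int (sign \<pi>) * (\<Prod>i\<in>UNIV. transpose (\<chi> i j. p (f i) j) $ i $ \<pi> i))"
      if "\<pi> \<in> P" for \<pi>
    proof -
      have \<pi>: "\<pi> permutes UNIV" using that by (simp add: P_def)
      have "(\<Prod>i\<in>UNIV. c (f (\<pi> i))) = (\<Prod>i\<in>UNIV. c (f i))"
        using prod.permute[OF \<pi>, of "\<lambda>i. c (f i)"] by (simp add: comp_def)
      moreover have "det (\<chi> i j. q (f (\<pi> i)) j) = of_int (sign \<pi>) * det (\<chi> i j. q (f i) j)"
        using det_permute_rows[OF \<pi>, of "\<chi> i j. q (f i) j"] by simp
      ultimately show ?thesis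
        by (simp add: g_def prod.distrib transpose_def mult_ac)
    qed
    then have "(\<Sum>\<pi>\<in>P. g (f \<circ> \<pi>)) = (\<Sum>\<pi>\<in>P. (\<Prod>i\<in>UNIV. c (f i)) * det (\<chi> i j. q (f i) j) *
        (of_int (sign \<pi>) * (\<Prod>i\<in>UNIV. transpose (\<chi> i j. p (f i) j) $ i $ \<pi> i)))"
      by (rule sum.cong[OF refl])
    also have "\<dots> = (\<Prod>i\<in>UNIV. c (f i)) * det (\<chi> i j. q (f i) j) *
        det (transpose (\<chi> i j. p (f i) j))"
      unfolding det_def[of "transpose _"] P_def by (simp add: sum_distrib_left)
    finally show ?thesis by (simp add: det_transpose mult_ac)
  qed
  have "of_nat (card P) * (\<Sum>f\<in>F. g f) = (\<Sum>\<pi>\<in>P. \<Sum>f\<in>F. g f)"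
    by simp
  also have "\<dots> = (\<Sum>\<pi>\<in>P. \<Sum>f\<in>F. g (f \<circ> \<pi>))"
    using reindex by (rule sum.cong[OF refl])
  also have "\<dots> = (\<Sum>f\<in>F. \<Sum>\<pi>\<in>P. g (f \<circ> \<pi>))"
    by (rule sum.swap)
  finally show ?thesis
    using det_sum_rank_one_rows[OF finG, of c p q] orbit
    by (simp add: F_def P_def g_def card_permutations)
qed

lemma unit_rows_sum:
  fixes f :: "'n::finite \<Rightarrow> real"
  assumes inj: "inj_on sp Out" and k: "k \<in> Out"
  shows "(\<Sum>k'\<in>Out. f k' * (if sp k = sp k' then 1 else 0)) = f k"
proof -
  have "(\<Sum>k'\<in>Out. f k' * (if sp k = sp k' then 1 else 0)) = (\<Sum>k'\<in>Out. if k' = k then f k' else 0)"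
    using inj k by (intro sum.cong) (auto dest: inj_onD)
  also have "\<dots> = f k" using k by (simp add: sum.delta')
  finally show ?thesis .
qed

lemma unit_rows_left_null:
  fixes A :: "real^'n::finite^'n"
  assumes inj: "inj_on sp Out" and rows: "\<forall>k\<in>Out. \<forall>j. A $ k $ j = (if j = sp k then 1 else 0)"
    and null: "w v* A = 0" and vanish: "\<forall>k. k \<notin> Out \<longrightarrow> w $ k = 0"
  shows "w = 0"
proof -
  have "w $ k = 0" if k: "k \<in> Out" for k
  proof -
    have "0 = (\<Sum>k'\<in>UNIV. w $ k' * A $ k' $ sp k)"
      using null by (simp add: vec_eq_iff vector_matrix_mult_def)
    also have "\<dots> = (\<Sum>k'\<in>Out. w $ k' * A $ k' $ sp k)"
      using vanish by (intro sum.mono_neutral_right) auto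
    also have "\<dots> = w $ k"
      using unit_rows_sum[OF inj k, of "\<lambda>k'. w $ k'"] rows by simp
    finally show ?thesis by simp
  qed
  then show ?thesis using vanish by (simp add: vec_eq_iff) metis
qed

lemma unit_rows_extend_left_null:
  fixes A :: "real^'n::finite^'n"
  assumes inj: "inj_on sp Out" and rows: "\<forall>k\<in>Out. \<forall>j. A $ k $ j = (if j = sp k then 1 else 0)"
    and cols: "\<forall>j. j \<notin> sp ` Out \<longrightarrow> (\<Sum>k\<in>- Out. g k * A $ k $ j) = 0"
  shows "\<exists>u. u v* A = 0 \<and> (\<forall>k. k \<notin> Out \<longrightarrow> u $ k = g k)"
proof -
  define u :: "real^'n" where
    "u = (\<chi> k. if k \<in> Out then - (\<Sum>k'\<in>- Out. g k' * A $ k' $ sp k) else g k)"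
  have "(\<Sum>k\<in>UNIV. u $ k * A $ k $ j) = 0" for j
  proof -
    have split: "(\<Sum>k\<in>UNIV. u $ k * A $ k $ j) =
        (\<Sum>k\<in>- Out. g k * A $ k $ j) + (\<Sum>k\<in>Out. u $ k * (if j = sp k then 1 else 0))"
      using sum.subset_diff[of Out UNIV "\<lambda>k. u $ k * A $ k $ j"] rows
      by (simp add: u_def Compl_eq_Diff_UNIV)
    show ?thesis
    proof (cases "j \<in> sp ` Out")
      case True
      then obtain k where k: "k \<in> Out" "j = sp k" by blast
      show ?thesis
        unfolding split using unit_rows_sum[OF inj k(1), of "\<lambda>k. u $ k"] k by (simp add: u_def)
    next
      case False
      then have "(\<Sum>k\<in>Out. u $ k * (if j = sp k then 1 else 0)) = 0"
        by (intro sum.neutral) auto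
      then show ?thesis unfolding split using cols False by simp
    qed
  qed
  then have "u v* A = 0" by (simp add: vec_eq_iff vector_matrix_mult_def)
  then show ?thesis by (auto simp: u_def)
qed

lemma nonvanishing_path_sign:
  fixes h :: "real \<Rightarrow> real"
  assumes cont: "continuous_on {0..1} h" and nz: "\<And>t. 0 \<le> t \<Longrightarrow> t < 1 \<Longrightarrow> h t \<noteq> 0"
  shows "h 0 * h 1 \<ge> 0"
proof (rule ccontr)
  assume "\<not> h 0 * h 1 \<ge> 0"
  then have "h 1 \<noteq> 0" and "(h 0 < 0 \<and> 0 < h 1) \<or> (h 1 < 0 \<and> 0 < h 0)"
    by (auto simp: mult_less_0_iff not_le)
  moreover from this(2) obtain t where "0 \<le> t" "t \<le> 1" "h t = 0"
    using IVT'[of h 0 0 1, OF _ _ _ cont] IVT2'[of h 1 0 0, OF _ _ _ cont] by force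
  ultimately show False using nz[of t] by (cases "t = 1") auto
qed

lemma det_reaction_matrix_reversed_pair:
  fixes \<sigma> :: "'n::finite \<Rightarrow> 'n reaction"
  assumes kl: "k \<noteq> l" and rev: "\<sigma> l = (snd (\<sigma> k), fst (\<sigma> k))"
  shows "det (reaction_matrix \<sigma>) = 0"
proof -
  let ?R = "reaction_matrix \<sigma>"
  have R: "?R = (\<chi> i. if i = l then (-1) *s (?R $ k) else ?R $ i)"
    using rev by (simp add: vec_eq_iff reaction_matrix_def)
  have "det ?R = -1 * det (\<chi> i. if i = l then ?R $ k else ?R $ i)"
    by (subst R) (rule det_row_mul)
  also have "det (\<chi> i. if i = l then ?R $ k else ?R $ i) = 0"
    by (rule det_identical_rows[OF kl]) (simp add: row_def vec_eq_iff)
  finally show ?thesis by simp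
qed

lemma low_molecularity_single_row:
  fixes a b :: nat and t w :: real
  assumes "a + b \<le> 2" "0 \<le> t" "t < 1" "w * (real a - t * real b) = 0"
  shows "w * real a = 0"
proof (cases "a = 0")
  case False
  then have "b \<le> 1" using assms(1) by simp
  then have "t * real b \<le> t" using assms(2) by (simp add: mult_left_le)
  then have "real a - t * real b > 0" using False assms(3) by linarith
  then show ?thesis using assms(4) by simp
qed simp

text \<open>Two rows carrying one unit each: after keeping only the entries of w of maximal modulus m,
  the balance w1 (a1 - t b1) + w2 (a2 - t b2) = 0 still holds for the reactant parts.\<close>

lemma low_molecularity_row_pair:
  fixes a1 b1 a2 b2 :: nat and t w1 w2 m :: real
  assumes "a1 + b1 = 1" "a2 + b2 = 1" "\<bar>w1\<bar> \<le> m" "\<bar>w2\<bar> \<le> m" "0 \<le> t" "t < 1"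
    and eq: "w1 * (real a1 - t * real b1) + w2 * (real a2 - t * real b2) = 0"
  shows "(if \<bar>w1\<bar> = m then w1 else 0) * real a1 + (if \<bar>w2\<bar> = m then w2 else 0) * real a2 = 0"
proof -
  have scaled_not_max: "w = 0" if "\<bar>w\<bar> = m" "w = t * w'" "\<bar>w'\<bar> \<le> m" for w w'
  proof -
    have "m = t * \<bar>w'\<bar>" using that assms(5) by (simp add: abs_mult)
    also have "\<dots> \<le> t * m" using that(3) assms(5) by (rule mult_left_mono)
    finally have "m \<le> t * m" .
    then have "m \<le> 0" using assms(6) by (auto simp: mult_le_cancel_right1)
    then show ?thesis using that(1) by simp
  qed
  have "(a1 = 1 \<and> b1 = 0) \<or> (a1 = 0 \<and> b1 = 1)" "(a2 = 1 \<and> b2 = 0) \<or> (a2 = 0 \<and> b2 = 1)"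
    using assms(1,2) by linarith+
  then show ?thesis
  proof (elim disjE conjE)
    assume "a1 = 1" "b1 = 0" "a2 = 1" "b2 = 0"
    then have "w1 = - w2" using eq by simp
    then show ?thesis using \<open>a1 = 1\<close> \<open>a2 = 1\<close> by auto
  next
    assume "a1 = 1" "b1 = 0" "a2 = 0" "b2 = 1"
    then show ?thesis using eq scaled_not_max[of w1 w2] assms(4) by auto
  next
    assume "a1 = 0" "b1 = 1" "a2 = 1" "b2 = 0"
    then show ?thesis using eq scaled_not_max[of w2 w1] assms(3) by auto
  qed simp
qed

lemma low_molecularity_column:
  fixes a b :: "'k \<Rightarrow> nat" and w :: "'k \<Rightarrow> real"
  assumes fin: "finite N" and units: "(\<Sum>k\<in>N. a k + b k) \<le> 2"
    and bound: "\<forall>k\<in>N. \<bar>w k\<bar> \<le> m" and t: "0 \<le> t" "t < 1"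
    and eq: "(\<Sum>k\<in>N. w k * (real (a k) - t * real (b k))) = 0"
  shows "(\<Sum>k\<in>N. (if \<bar>w k\<bar> = m then w k else 0) * real (a k)) = 0"
proof -
  define Z where "Z = {k\<in>N. a k + b k > 0}"
  have ZN: "Z \<subseteq> N" by (auto simp: Z_def)
  have restrict: "(\<Sum>k\<in>N. f k) = (\<Sum>k\<in>Z. f k)" if "\<And>k. k \<in> N - Z \<Longrightarrow> f k = 0"
    for f :: "'k \<Rightarrow> 'a::comm_monoid_add"
    using that by (intro sum.mono_neutral_right[OF fin ZN]) auto
  have unitsZ: "(\<Sum>k\<in>Z. a k + b k) \<le> 2" using units restrict[of "\<lambda>k. a k + b k"] by (simp add: Z_def)
  have eqZ: "(\<Sum>k\<in>Z. w k * (real (a k) - t * real (b k))) = 0"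
    using eq restrict[of "\<lambda>k. w k * (real (a k) - t * real (b k))"] by (simp add: Z_def)
  have finZ: "finite Z" using fin ZN finite_subset by blast
  have "card Z = (\<Sum>k\<in>Z. 1::nat)" by simp
  also have "\<dots> \<le> (\<Sum>k\<in>Z. a k + b k)" by (rule sum_mono) (auto simp: Z_def)
  finally have "card Z \<le> 2" using unitsZ by simp
  then have "card Z = 0 \<or> card Z = 1 \<or> card Z = 2" by linarith
  then consider "Z = {}" | p where "Z = {p}" | p q where "Z = {p, q}" "p \<noteq> q"
    using finZ by (auto simp: card_1_singleton_iff card_2_iff)
  then have "(\<Sum>k\<in>Z. (if \<bar>w k\<bar> = m then w k else 0) * real (a k)) = 0"
  proof cases
    case (2 p)
    then have "w p * real (a p) = 0"
      using low_molecularity_single_row[of "a p" "b p" t "w p"] unitsZ eqZ t by simp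
    then show ?thesis using 2 by auto
  next
    case (3 p q)
    then have "p \<in> Z" "q \<in> Z" by auto
    then have "a p + b p > 0" "a q + b q > 0" unfolding Z_def by auto
    moreover have "a p + b p + (a q + b q) \<le> 2" using unitsZ 3 by simp
    ultimately have "a p + b p = 1" "a q + b q = 1" by linarith+
    moreover have "\<bar>w p\<bar> \<le> m" "\<bar>w q\<bar> \<le> m" using bound ZN 3 by auto
    moreover have "w p * (real (a p) - t * real (b p)) + w q * (real (a q) - t * real (b q)) = 0"
      using eqZ 3 by simp
    ultimately show ?thesis using low_molecularity_row_pair[OF _ _ _ _ t] 3 by simp
  qed simp
  then show ?thesis using restrict[of "\<lambda>k. (if \<bar>w k\<bar> = m then w k else 0) * real (a k)"]
    by (simp add: Z_def)
qed

text \<open>A left null vector w of Y - tY' would yield a nonzero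
  left null vector of Y: its maximal-modulus part, extended across the outflow rows.\<close>

lemma homotopy_nonsingular:
  fixes a b :: "'n::finite \<Rightarrow> 'n \<Rightarrow> nat" and t :: real
  assumes inj: "inj_on sp Out"
    and out_a: "\<forall>k\<in>Out. \<forall>j. a k j = (if j = sp k then 1 else 0)"
    and out_b: "\<forall>k\<in>Out. \<forall>j. b k j = 0"
    and units: "\<forall>j. j \<notin> sp ` Out \<longrightarrow> (\<Sum>k\<in>- Out. a k j + b k j) \<le> 2"
    and detA: "det (\<chi> k j. real (a k j)) \<noteq> 0"
    and t: "0 \<le> t" "t < 1"
  shows "det (\<chi> k j. real (a k j) - t * real (b k j)) \<noteq> 0"
proof
  define A :: "real^'n^'n" where "A = (\<chi> k j. real (a k j))"
  define Q :: "real^'n^'n" where "Q = (\<chi> k j. real (a k j) - t * real (b k j))"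
  assume "det (\<chi> k j. real (a k j) - t * real (b k j)) = 0"
  then obtain w where w: "w \<noteq> 0" "w v* Q = 0"
    using det_nz_left_null[of Q] by (auto simp: Q_def)
  have rowsA: "\<forall>k\<in>Out. \<forall>j. A $ k $ j = (if j = sp k then 1 else 0)"
    and rowsQ: "\<forall>k\<in>Out. \<forall>j. Q $ k $ j = (if j = sp k then 1 else 0)"
    using out_a out_b by (simp_all add: A_def Q_def)
  (* w is nonzero on some non-outflow row, so its maximal modulus m there is positive. *)
  have "\<exists>k. k \<notin> Out \<and> w $ k \<noteq> 0"
    using unit_rows_left_null[OF inj rowsQ w(2)] w(1) by blast
  then obtain k0 where k0: "k0 \<notin> Out" "w $ k0 \<noteq> 0" by blast
  define m where "m = Max ((\<lambda>k. \<bar>w $ k\<bar>) ` (- Out))"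
  have bound: "\<forall>k\<in>- Out. \<bar>w $ k\<bar> \<le> m" by (simp add: m_def)
  have "m \<in> (\<lambda>k. \<bar>w $ k\<bar>) ` (- Out)" unfolding m_def using k0(1) by (intro Max_in) auto
  then obtain k1 where k1: "k1 \<notin> Out" "\<bar>w $ k1\<bar> = m" by auto
  have "0 < \<bar>w $ k0\<bar>" using k0(2) by simp
  also have "\<dots> \<le> m" using bound k0(1) by simp
  finally have "m > 0" .
  (* The maximal-modulus part g of w is orthogonal to the columns of A not hit by sp. *)
  define g where "g k = (if \<bar>w $ k\<bar> = m then w $ k else 0)" for k
  have "(\<Sum>k\<in>- Out. g k * A $ k $ j) = 0" if j: "j \<notin> sp ` Out" for j
  proof -
    have "0 = (\<Sum>k\<in>UNIV. w $ k * Q $ k $ j)"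
      using w(2) by (simp add: vec_eq_iff vector_matrix_mult_def)
    also have "\<dots> = (\<Sum>k\<in>- Out. w $ k * Q $ k $ j)"
      using j rowsQ by (intro sum.mono_neutral_right) auto
    also have "\<dots> = (\<Sum>k\<in>- Out. w $ k * (real (a k j) - t * real (b k j)))"
      by (simp add: Q_def)
    finally have "(\<Sum>k\<in>- Out. w $ k * (real (a k j) - t * real (b k j))) = 0" by simp
    then show ?thesis
      using low_molecularity_column[of "- Out" "\<lambda>k. a k j" "\<lambda>k. b k j" "\<lambda>k. w $ k" m t]
        units j bound t
      by (simp add: g_def A_def)
  qed
  then obtain u where u: "u v* A = 0" "\<forall>k. k \<notin> Out \<longrightarrow> u $ k = g k"
    using unit_rows_extend_left_null[OF inj rowsA] by blast
  have "u $ k1 \<noteq> 0" using u(2) k1 \<open>m > 0\<close> by (auto simp: g_def)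
  then show False using u(1) detA det_nz_left_null[of A] by (auto simp: A_def)
qed

definition outflow_species :: "'n reaction \<Rightarrow> 'n" where
  "outflow_species r = (SOME i. r = (unit_complex i, \<lambda>_. 0))"

lemma outflow_species_unit:
  "is_outflow r \<Longrightarrow> r = (unit_complex (outflow_species r), \<lambda>_. 0)"
  unfolding is_outflow_def outflow_species_def by (rule someI_ex)

lemma non_outflow_molecularity:
  fixes \<sigma> :: "'n::finite \<Rightarrow> 'n reaction"
  assumes RN: "reaction_network G" and inj: "inj \<sigma>" and rng: "range \<sigma> \<subseteq> G"
    and noin: "\<forall>k. \<not> is_inflow (\<sigma> k)"
    and norev: "\<forall>k l. k \<noteq> l \<longrightarrow> \<sigma> l \<noteq> (snd (\<sigma> k), fst (\<sigma> k))"
  shows "(\<Sum>k | \<not> is_outflow (\<sigma> k). fst (\<sigma> k) j + snd (\<sigma> k) j) \<le> TM G j"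
proof -
  define N where "N = {k. \<not> is_outflow (\<sigma> k)}"
  define pair where "pair k = {fst (\<sigma> k), snd (\<sigma> k)}" for k
  define I where "I = {{y, y'} | y y'. (y, y') \<in> G \<and> \<not> is_flow (y, y')}"
  have neq: "fst (\<sigma> k) \<noteq> snd (\<sigma> k)" for k
    using RN rng unfolding reaction_network_def by (auto simp: split_beta)
  have "inj_on pair N"
  proof (rule inj_onI)
    fix k l assume "k \<in> N" "l \<in> N" "pair k = pair l"
    then have "\<sigma> k = \<sigma> l \<or> \<sigma> l = (snd (\<sigma> k), fst (\<sigma> k))"
      unfolding pair_def by (auto simp: doubleton_eq_iff prod_eq_iff)
    then show "k = l" using inj norev by (auto dest: injD)
  qed
  moreover have "pair ` N \<subseteq> I"
  proof
    fix c assume "c \<in> pair ` N"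
    then obtain k where k: "k \<in> N" "c = pair k" by blast
    have "\<sigma> k \<in> G" "\<not> is_flow (\<sigma> k)" using rng k(1) noin by (auto simp: N_def is_flow_def)
    then show "c \<in> I" unfolding I_def k(2) pair_def
      by (intro CollectI exI[of _ "fst (\<sigma> k)"] exI[of _ "snd (\<sigma> k)"]) simp
  qed
  moreover have "finite I"
  proof (rule finite_subset)
    show "I \<subseteq> (\<lambda>r. {fst r, snd r}) ` G" unfolding I_def by force
    show "finite ((\<lambda>r. {fst r, snd r}) ` G)" using RN by (simp add: reaction_network_def)
  qed
  ultimately have "(\<Sum>k\<in>N. \<Sum>z\<in>pair k. z j) \<le> (\<Sum>c\<in>I. \<Sum>z\<in>c. z j)"
    using sum.reindex[of pair N "\<lambda>c. \<Sum>z\<in>c. z j"]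
      sum_mono2[of I "pair ` N" "\<lambda>c. \<Sum>z\<in>c. z j"] by simp
  moreover have "(\<Sum>k\<in>N. \<Sum>z\<in>pair k. z j) = (\<Sum>k\<in>N. fst (\<sigma> k) j + snd (\<sigma> k) j)"
    by (simp add: pair_def neq)
  ultimately show ?thesis by (simp add: TM_def I_def N_def)
qed

text \<open>The Jacobian criterion for a single choice of reactions: det Y * det R >= 0.  Reversed
  pairs give det R = 0; otherwise det (Y - tY') does not vanish for t in [0,1), so det Y and
  det R = det (Y - Y') have the same sign.\<close>

lemma orientation_product_nonneg:
  fixes G :: "('n::finite) reaction set" and \<sigma> :: "'n \<Rightarrow> 'n reaction"
  assumes RN: "reaction_network G" and TM2: "\<forall>i. TM G i \<le> 2"
    and inj: "inj \<sigma>" and rng: "range \<sigma> \<subseteq> G" and noin: "\<forall>k. \<not> is_inflow (\<sigma> k)"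
  shows "det (reactant_matrix \<sigma>) * det (reaction_matrix \<sigma>) \<ge> 0"
proof (cases "\<exists>k l. k \<noteq> l \<and> \<sigma> l = (snd (\<sigma> k), fst (\<sigma> k))")
  case True
  then obtain k l where "k \<noteq> l" "\<sigma> l = (snd (\<sigma> k), fst (\<sigma> k))" by blast
  then show ?thesis by (simp add: det_reaction_matrix_reversed_pair)
next
  case norev: False
  define Out where "Out = {k. is_outflow (\<sigma> k)}"
  define sp where "sp k = outflow_species (\<sigma> k)" for k
  have out: "\<sigma> k = (unit_complex (sp k), \<lambda>_. 0)" if "k \<in> Out" for k
    using outflow_species_unit that by (simp add: Out_def sp_def)
  have "inj_on sp Out"
    using inj out by (intro inj_onI) (metis injD)
  moreover have "\<forall>k\<in>Out. \<forall>j. fst (\<sigma> k) j = (if j = sp k then 1 else 0)"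
    and "\<forall>k\<in>Out. \<forall>j. snd (\<sigma> k) j = 0"
    using out by (simp_all add: unit_complex_def)
  moreover have "(\<Sum>k\<in>- Out. fst (\<sigma> k) j + snd (\<sigma> k) j) \<le> 2" for j
  proof -
    have "- Out = {k. \<not> is_outflow (\<sigma> k)}" by (auto simp: Out_def)
    moreover have "\<forall>k l. k \<noteq> l \<longrightarrow> \<sigma> l \<noteq> (snd (\<sigma> k), fst (\<sigma> k))" using norev by blast
    ultimately have "(\<Sum>k\<in>- Out. fst (\<sigma> k) j + snd (\<sigma> k) j) \<le> TM G j"
      using non_outflow_molecularity[OF RN inj rng noin] by simp
    then show ?thesis using TM2 le_trans by blast
  qed
  ultimately have nonsingular: "det (\<chi> k j. real (fst (\<sigma> k) j) - t * real (snd (\<sigma> k) j)) \<noteq> 0"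
    if "det (reactant_matrix \<sigma>) \<noteq> 0" "0 \<le> t" "t < 1" for t
    using homotopy_nonsingular[of sp Out "\<lambda>k j. fst (\<sigma> k) j" "\<lambda>k j. snd (\<sigma> k) j" t] that
    by (simp add: reactant_matrix_def)
  define h where "h t = det (\<chi> k j. real (fst (\<sigma> k) j) - t * real (snd (\<sigma> k) j) :: real^'n^'n)"
    for t
  have "h 0 * h 1 \<ge> 0" if "det (reactant_matrix \<sigma>) \<noteq> 0"
  proof (rule nonvanishing_path_sign)
    show "continuous_on {0..1} h" unfolding h_def det_def by (intro continuous_intros)
  qed (use nonsingular that in \<open>simp add: h_def\<close>)
  moreover have "h 0 = det (reactant_matrix \<sigma>)" "h 1 = det (reaction_matrix \<sigma>)"
    by (simp_all add: h_def reactant_matrix_def reaction_matrix_def)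
  ultimately show ?thesis by fastforce
qed

text \<open>The same sign condition for an arbitrary map from species to reactions: choices that
  repeat a reaction or use an inflow have a zero row or two equal rows in Y.\<close>

lemma reactant_reaction_det_product_nonneg:
  fixes G :: "('n::finite) reaction set" and f :: "'n \<Rightarrow> 'n reaction"
  assumes RN: "reaction_network G" and TM2: "\<forall>i. TM G i \<le> 2" and fG: "\<forall>i. f i \<in> G"
  shows "det (reactant_matrix f) * det (reaction_matrix f) \<ge> 0"
proof (cases "inj f \<and> (\<forall>k. \<not> is_inflow (f k))")
  case True
  then show ?thesis using orientation_product_nonneg[OF RN TM2] fG by blast
next
  case False
  have "det (reactant_matrix f) = 0"
  proof (cases "inj f")
    case True
    with False obtain k where "is_inflow (f k)" by blast
    then have "row k (reactant_matrix f) = 0"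
      by (auto simp: is_inflow_def row_def reactant_matrix_def vec_eq_iff)
    then show ?thesis by (rule det_zero_row(1))
  next
    case False
    then obtain k l where "k \<noteq> l" "f k = f l" unfolding inj_def by blast
    then show ?thesis
      by (intro det_identical_rows[of k l]) (auto simp: row_def reactant_matrix_def vec_eq_iff)
  qed
  then show ?thesis by simp
qed

text \<open>With c_r the reaction
  rates at a state x, this is the negative Jacobian of the mass-action field, transposed and
  scaled by diag(x); it also governs differences of the field (see mass_action_injective).\<close>

definition weighted_jacobian :: "('n::finite) reaction set \<Rightarrow> ('n reaction \<Rightarrow> real) \<Rightarrow> real^'n^'n"
  where "weighted_jacobian G c =
    (\<chi> i j. \<Sum>r\<in>G. c r * real (fst r i) * (real (fst r j) - real (snd r j)))"

text \<open>By the Cauchy-Binet identity n! det B(c) is a sum of terms c_f det Y_f det R_f, all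
  nonnegative, and the choice of all outflows contributes a positive term.\<close>

lemma weighted_jacobian_det_pos:
  fixes G :: "('n::finite) reaction set" and c :: "'n reaction \<Rightarrow> real"
  assumes CF: "CFSTR G" and TM2: "\<forall>i. TM G i \<le> 2" and cpos: "\<forall>r\<in>G. c r > 0"
  shows "det (weighted_jacobian G c) > 0"
proof -
  have RN: "reaction_network G" and finG: "finite G" and outG: "\<forall>i. (unit_complex i, \<lambda>_. 0) \<in> G"
    using CF by (simp_all add: CFSTR_def reaction_network_def)
  define F where "F = {f :: 'n \<Rightarrow> 'n reaction. \<forall>i. f i \<in> G}"
  define contribution where
    "contribution f = (\<Prod>i\<in>UNIV. c (f i)) * det (reactant_matrix f) * det (reaction_matrix f)"
    for f :: "'n \<Rightarrow> 'n reaction"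
  have expand: "of_nat (fact CARD('n)) * det (weighted_jacobian G c) = (\<Sum>f\<in>F. contribution f)"
    using det_sum_rank_one_rows_symmetric[OF finG, of c "\<lambda>r i. real (fst r i)"
        "\<lambda>r j. real (fst r j) - real (snd r j)"]
    by (simp add: weighted_jacobian_def F_def contribution_def
        reactant_matrix_def reaction_matrix_def)
  have "(\<Sum>f\<in>F. contribution f) > 0"
  proof (rule sum_pos2)
    show "finite F"
      using finite_set_of_finite_funs[of "UNIV :: 'n set" G undefined] finG by (simp add: F_def)
    define outflows where "outflows i = (unit_complex i, \<lambda>_::'n. 0::nat)" for i :: 'n
    show "outflows \<in> F" using outG by (simp add: F_def outflows_def)
    have "reactant_matrix outflows = mat 1" "reaction_matrix outflows = mat 1"
      by (simp_all add: reactant_matrix_def reaction_matrix_def outflows_def mat_def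
          unit_complex_def vec_eq_iff)
    moreover have "(\<Prod>i\<in>UNIV. c (outflows i)) > 0"
      using outG cpos by (intro prod_pos) (simp add: outflows_def)
    ultimately show "contribution outflows > 0" by (simp add: contribution_def)
    show "contribution f \<ge> 0" if "f \<in> F" for f
    proof -
      have "(\<Prod>i\<in>UNIV. c (f i)) \<ge> 0"
        using cpos that by (intro prod_nonneg) (auto simp: F_def less_imp_le)
      moreover have "det (reactant_matrix f) * det (reaction_matrix f) \<ge> 0"
        using reactant_reaction_det_product_nonneg[OF RN TM2, of f] that by (simp add: F_def)
      ultimately show ?thesis by (simp add: contribution_def mult.assoc)
    qed
  qed
  then have "0 < (fact CARD('n) :: real) * det (weighted_jacobian G c)" using expand by simp
  moreover have "(fact CARD('n) :: real) > 0" by simp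
  ultimately show ?thesis by (simp add: zero_less_mult_iff)
qed

lemma exp_secant_slope:
  fixes a b :: real
  shows "\<exists>l>0. exp a - exp b = l * (a - b)"
proof (cases "a = b")
  case False
  define l where "l = (exp a - exp b) / (a - b)"
  have "l > 0"
    using False by (cases "a < b") (auto simp: l_def divide_neg_neg)
  moreover have "exp a - exp b = l * (a - b)" using False by (simp add: l_def)
  ultimately show ?thesis by blast
qed (auto intro: exI[of _ 1])

lemma monomial_exp_ln:
  fixes x :: "real^'n::finite"
  assumes "positive_vec x"
  shows "(\<Prod>j\<in>UNIV. (x $ j) ^ y j) = exp (\<Sum>j\<in>UNIV. real (y j) * ln (x $ j))"
proof -
  have "(x $ j) ^ y j = exp (real (y j) * ln (x $ j))" for j
    using assms by (simp add: positive_vec_def exp_of_nat_mult)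
  then show ?thesis by (simp add: exp_sum)
qed

lemma mass_action_component:
  "mass_action G \<kappa> x $ j =
    (\<Sum>r\<in>G. \<kappa> r * (\<Prod>i\<in>UNIV. (x $ i) ^ fst r i) * (real (snd r j) - real (fst r j)))"
  by (simp add: mass_action_def)

text \<open>Writing x^y_r - z^y_r = lambda_r <y_r, ln x - ln z>
  with lambda_r > 0, the difference f(z) - f(x) is (ln x - ln z) B(kappa lambda).\<close>

lemma mass_action_injective:
  fixes G :: "('n::finite) reaction set" and \<kappa> :: "'n reaction \<Rightarrow> real"
  assumes nonsing: "\<And>c. \<forall>r\<in>G. c r > 0 \<Longrightarrow> det (weighted_jacobian G c) \<noteq> 0"
    and kpos: "\<forall>r\<in>G. \<kappa> r > 0" and px: "positive_vec x" and pz: "positive_vec z"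
    and eq: "mass_action G \<kappa> x = mass_action G \<kappa> z"
  shows "x = z"
proof -
  define lx where "lx r = (\<Sum>j\<in>UNIV. real (fst r j) * ln (x $ j))" for r :: "'n reaction"
  define lz where "lz r = (\<Sum>j\<in>UNIV. real (fst r j) * ln (z $ j))" for r :: "'n reaction"
  define slope where "slope r = (SOME l. l > 0 \<and> exp (lx r) - exp (lz r) = l * (lx r - lz r))"
    for r
  have slope: "slope r > 0 \<and> exp (lx r) - exp (lz r) = slope r * (lx r - lz r)" for r
    unfolding slope_def using exp_secant_slope[of "lx r" "lz r"] by (rule someI_ex)
  define c where "c r = \<kappa> r * slope r" for r
  define \<delta> :: "real^'n" where "\<delta> = (\<chi> i. ln (x $ i) - ln (z $ i))"
  have diff: "lx r - lz r = (\<Sum>i\<in>UNIV. real (fst r i) * \<delta> $ i)" for r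
    unfolding lx_def lz_def \<delta>_def by (simp add: sum_subtractf[symmetric] algebra_simps)
  have "(\<Sum>i\<in>UNIV. \<delta> $ i * weighted_jacobian G c $ i $ j) = 0" for j
  proof -
    have "(\<Sum>i\<in>UNIV. \<delta> $ i * weighted_jacobian G c $ i $ j)
        = (\<Sum>r\<in>G. c r * (lx r - lz r) * (real (fst r j) - real (snd r j)))"
      unfolding weighted_jacobian_def diff
      by (simp add: sum_distrib_left sum_distrib_right sum.swap[of _ UNIV] algebra_simps)
    also have "\<dots> = (\<Sum>r\<in>G. \<kappa> r * (exp (lx r) - exp (lz r)) * (real (fst r j) - real (snd r j)))"
      using slope by (simp add: c_def mult.assoc)
    also have "\<dots> = mass_action G \<kappa> z $ j - mass_action G \<kappa> x $ j"
      unfolding mass_action_component monomial_exp_ln[OF px] monomial_exp_ln[OF pz] lx_def lz_def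
      by (simp add: sum_subtractf[symmetric] algebra_simps)
    finally show ?thesis using eq by simp
  qed
  then have "\<delta> v* weighted_jacobian G c = 0"
    by (simp add: vec_eq_iff vector_matrix_mult_def)
  moreover have "det (weighted_jacobian G c) \<noteq> 0"
    using nonsing kpos slope by (simp add: c_def)
  ultimately have "\<delta> = 0" using det_nz_left_null by blast
  then have "ln (x $ i) = ln (z $ i)" for i by (simp add: \<delta>_def vec_eq_iff)
  then show "x = z" using px pz by (simp add: vec_eq_iff positive_vec_def)
qed

theorem mainTheorem1:
  fixes G :: "('n::finite) reaction set"
  assumes "CFSTR G"
    and "\<forall>i. TM G i \<le> 2"
  shows "passes_jacobian_criterion G \<and> no_multiple_steady_states G"
proof
  have RN: "reaction_network G" using assms(1) by (simp add: CFSTR_def)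
  show "passes_jacobian_criterion G"
    using orientation_product_nonneg[OF RN assms(2)]
    by (simp add: passes_jacobian_criterion_def orientation_def)
  have "\<And>c. \<forall>r\<in>G. c r > 0 \<Longrightarrow> det (weighted_jacobian G c) \<noteq> 0"
    using weighted_jacobian_det_pos[OF assms] by fastforce
  then show "no_multiple_steady_states G"
    unfolding no_multiple_steady_states_def by (metis mass_action_injective)
qed

end
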